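(* For real $\eta\ge0$ let $$w(\eta)=\frac{1}{8}\mathbb{I}+\frac{\eta}{4}\Big(V_{(AB)}-\tfrac{\mathbb{I}}{2}\Big)+\frac{\eta}{4}\Big(V_{(AC)}-\tfrac{\mathbb{I}}{2}\Big)+\frac{\eta}{4}\Big(V_{(BC)}-\tfrac{\mathbb{I}}{2}\Big)$$ on $(\mathbb{C}^2)^{\otimes3}$. Then $w(\eta)$ is local-positive if and only if $\eta\le\frac{2}{3}$. Moreover each bipartite reduction of $w(\eta)$ equals $(1-\eta)\frac{\mathbb{I}}{4}+\eta\frac{V}{2}$.
   Context: $V_{(XY)}$ swaps tensor factors $X,Y\in\{A,B,C\}$; $V$ is the swap on $\mathbb{C}^2\otimes\mathbb{C}^2$. An operator $M$ on $(\mathbb{C}^2)^{\otimes3}$ is local-positive if $\langle\psi_1\psi_2\psi_3|M|\psi_1\psi_2\psi_3\rangle\ge0$ for all unit vectors $\psi_i\in\mathbb{C}^2$. *)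

theory Defs
  imports Complex_Main "HOL-Library.Complex_Order"
begin

text \<open>Computational basis of (C^2)^{\<otimes>3} is indexed by triples (a,b,c) of bools
  (factor order A,B,C); of C^2 \<otimes> C^2 by pairs. An operator is given by its
  matrix entries: M x y = <x|M|y>.\<close>

type_synonym op3 = "bool \<times> bool \<times> bool \<Rightarrow> bool \<times> bool \<times> bool \<Rightarrow> complex"
type_synonym op2 = "bool \<times> bool \<Rightarrow> bool \<times> bool \<Rightarrow> complex"

definition ident3 :: op3 where
  "ident3 x y = (if x = y then 1 else 0)"

definition swapAB :: op3 where
  "swapAB x y = (case y of (a,b,c) \<Rightarrow> if x = (b,a,c) then 1 else 0)"

definition swapAC :: op3 where
  "swapAC x y = (case y of (a,b,c) \<Rightarrow> if x = (c,b,a) then 1 else 0)"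

definition swapBC :: op3 where
  "swapBC x y = (case y of (a,b,c) \<Rightarrow> if x = (a,c,b) then 1 else 0)"

definition ident2 :: op2 where
  "ident2 x y = (if x = y then 1 else 0)"

definition swap2 :: op2 where
  "swap2 x y = (case y of (a,b) \<Rightarrow> if x = (b,a) then 1 else 0)"

definition w :: "real \<Rightarrow> op3" where
  "w \<eta> x y = ident3 x y / 8
     + complex_of_real (\<eta> / 4) * (swapAB x y - ident3 x y / 2)
     + complex_of_real (\<eta> / 4) * (swapAC x y - ident3 x y / 2)
     + complex_of_real (\<eta> / 4) * (swapBC x y - ident3 x y / 2)"

definition unit_vec :: "(bool \<Rightarrow> complex) \<Rightarrow> bool" where
  "unit_vec \<psi> \<longleftrightarrow> (\<Sum>i\<in>UNIV. (cmod (\<psi> i))\<^sup>2) = 1"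

definition prod_state :: "(bool \<Rightarrow> complex) \<Rightarrow> (bool \<Rightarrow> complex) \<Rightarrow> (bool \<Rightarrow> complex)
    \<Rightarrow> bool \<times> bool \<times> bool \<Rightarrow> complex" where
  "prod_state \<psi>1 \<psi>2 \<psi>3 x = (case x of (a,b,c) \<Rightarrow> \<psi>1 a * \<psi>2 b * \<psi>3 c)"

definition expect3 :: "op3 \<Rightarrow> (bool \<times> bool \<times> bool \<Rightarrow> complex) \<Rightarrow> complex" where
  "expect3 M \<phi> = (\<Sum>x\<in>UNIV. \<Sum>y\<in>UNIV. cnj (\<phi> x) * M x y * \<phi> y)"

definition local_positive :: "op3 \<Rightarrow> bool" where
  "local_positive M \<longleftrightarrow> (\<forall>\<psi>1 \<psi>2 \<psi>3. unit_vec \<psi>1 \<longrightarrow> unit_vec \<psi>2 \<longrightarrow> unit_vec \<psi>3 \<longrightarrow>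
      0 \<le> expect3 M (prod_state \<psi>1 \<psi>2 \<psi>3))"

definition ptrA :: "op3 \<Rightarrow> op2" where
  "ptrA M x y = (case x of (b,c) \<Rightarrow> case y of (b',c') \<Rightarrow> \<Sum>a\<in>UNIV. M (a,b,c) (a,b',c'))"

definition ptrB :: "op3 \<Rightarrow> op2" where
  "ptrB M x y = (case x of (a,c) \<Rightarrow> case y of (a',c') \<Rightarrow> \<Sum>b\<in>UNIV. M (a,b,c) (a',b,c'))"

definition ptrC :: "op3 \<Rightarrow> op2" where
  "ptrC M x y = (case x of (a,b) \<Rightarrow> case y of (a',b') \<Rightarrow> \<Sum>c\<in>UNIV. M (a,b,c) (a',b',c))"

definition werner2 :: "real \<Rightarrow> op2" where
  "werner2 \<eta> x y = complex_of_real (1 - \<eta>) * ident2 x y / 4 + complex_of_real \<eta> * swap2 x y / 2"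

end

theory Submission
  imports Defs "HOL-Analysis.Analysis"
begin

(* Write w(eta) = (1 - 3 eta)/8 I + eta/4 (V_AB + V_AC + V_BC).  On a product
   state psi1 \<otimes> psi2 \<otimes> psi3 of unit vectors, <V_XY> is the squared overlap |<psi_X|psi_Y>|^2,
   so  <w(eta)> = (1 - 3 eta)/8 + eta/4 S  with S the sum of the three squared overlaps.
   Via Bloch vectors, 2 |<phi|psi>|^2 = 1 + r_phi \<bullet> r_psi with unit vectors r in R^3, and for
   any three unit vectors of a real inner product space the pairwise inner products sum to at
   least -3/2 (expand |r1 + r2 + r3|^2 \<ge> 0).  Hence S \<ge> 3/4 and <w(eta)> \<ge> 1/8 - 3 eta/16 \<ge> 0
   for eta \<le> 2/3.  Conversely three states with Bloch vectors at 120 degrees ("trine") attain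
   S = 3/4, giving <w(eta)> = 1/8 - 3 eta/16, negative for eta > 2/3.  The reductions to
   two parties are a finite computation. *)

definition braket :: "(bool \<Rightarrow> complex) \<Rightarrow> (bool \<Rightarrow> complex) \<Rightarrow> complex" where
  "braket \<phi> \<psi> = (\<Sum>i\<in>UNIV. cnj (\<phi> i) * \<psi> i)"

definition sqnorm :: "(bool \<Rightarrow> complex) \<Rightarrow> real" where
  "sqnorm \<phi> = (\<Sum>i\<in>UNIV. (cmod (\<phi> i))\<^sup>2)"

lemma unit_vec_iff_sqnorm: "unit_vec \<phi> \<longleftrightarrow> sqnorm \<phi> = 1"
  by (simp add: unit_vec_def sqnorm_def)

lemma sum_UNIV_pair: "(\<Sum>x\<in>UNIV. f x) = (\<Sum>a\<in>UNIV. \<Sum>b\<in>UNIV. f (a, b))"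
  by (simp add: sum.cartesian_product flip: UNIV_Times_UNIV)

lemma expect3_add: "expect3 (\<lambda>x y. M x y + N x y) \<phi> = expect3 M \<phi> + expect3 N \<phi>"
  by (simp add: expect3_def sum.distrib distrib_left distrib_right)

lemma expect3_scale: "expect3 (\<lambda>x y. c * M x y) \<phi> = c * expect3 M \<phi>"
  by (simp add: expect3_def sum_distrib_left algebra_simps)

lemmas expect3_product_unfold =
  expect3_def sum_UNIV_pair prod_state_def braket_def sqnorm_def
  of_real_mult of_real_sum complex_norm_square

lemma expect3_ident3:
  "expect3 ident3 (prod_state a b c) = of_real (sqnorm a * sqnorm b * sqnorm c)"
  unfolding expect3_product_unfold ident3_def by (simp add: UNIV_bool algebra_simps)

lemma expect3_swapAB:
  "expect3 swapAB (prod_state a b c) = of_real ((cmod (braket a b))\<^sup>2 * sqnorm c)"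
  unfolding expect3_product_unfold swapAB_def by (simp add: UNIV_bool algebra_simps)

lemma expect3_swapAC:
  "expect3 swapAC (prod_state a b c) = of_real ((cmod (braket a c))\<^sup>2 * sqnorm b)"
  unfolding expect3_product_unfold swapAC_def by (simp add: UNIV_bool algebra_simps)

lemma expect3_swapBC:
  "expect3 swapBC (prod_state a b c) = of_real ((cmod (braket b c))\<^sup>2 * sqnorm a)"
  unfolding expect3_product_unfold swapBC_def by (simp add: UNIV_bool algebra_simps)

lemma w_decomposition:
  "w \<eta> = (\<lambda>x y. of_real ((1 - 3 * \<eta>) / 8) * ident3 x y
                 + of_real (\<eta> / 4) * (swapAB x y + swapAC x y + swapBC x y))"
  by (simp add: fun_eq_iff w_def field_simps)

lemma expect3_w_product:
  "expect3 (w \<eta>) (prod_state a b c) = of_real ((1 - 3 * \<eta>) / 8 * sqnorm a * sqnorm b * sqnorm c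
     + \<eta> / 4 * ((cmod (braket a b))\<^sup>2 * sqnorm c + (cmod (braket a c))\<^sup>2 * sqnorm b
                + (cmod (braket b c))\<^sup>2 * sqnorm a))"
  unfolding w_decomposition expect3_add expect3_scale
    expect3_ident3 expect3_swapAB expect3_swapAC expect3_swapBC
  by (simp add: algebra_simps)

definition bloch :: "(bool \<Rightarrow> complex) \<Rightarrow> real \<times> real \<times> real" where
  "bloch \<phi> = (2 * Re (cnj (\<phi> True) * \<phi> False), 2 * Im (cnj (\<phi> True) * \<phi> False),
              (cmod (\<phi> True))\<^sup>2 - (cmod (\<phi> False))\<^sup>2)"

lemma bloch_overlap:
  "2 * (cmod (braket \<phi> \<psi>))\<^sup>2 = sqnorm \<phi> * sqnorm \<psi> + bloch \<phi> \<bullet> bloch \<psi>"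
  unfolding bloch_def braket_def sqnorm_def cmod_power2
  by (simp add: UNIV_bool power2_eq_square algebra_simps)

lemma bloch_self: "bloch \<phi> \<bullet> bloch \<phi> = (sqnorm \<phi>)\<^sup>2"
  unfolding bloch_def sqnorm_def cmod_power2
  by (simp add: UNIV_bool power2_eq_square algebra_simps)

lemma unit_vectors_inner_sum_ge:
  fixes x y z :: "'a::real_inner"
  assumes "x \<bullet> x = 1" "y \<bullet> y = 1" "z \<bullet> z = 1"
  shows "- 3 / 2 \<le> x \<bullet> y + x \<bullet> z + y \<bullet> z"
proof -
  have "0 \<le> (x + y + z) \<bullet> (x + y + z)" by simp
  also have "\<dots> = x \<bullet> x + y \<bullet> y + z \<bullet> z + 2 * (x \<bullet> y + x \<bullet> z + y \<bullet> z)"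
    by (simp add: inner_add_left inner_add_right inner_commute)
  finally show ?thesis using assms by simp
qed

lemma overlap_sum_ge:
  assumes "sqnorm a = 1" "sqnorm b = 1" "sqnorm c = 1"
  shows "3 / 4 \<le> (cmod (braket a b))\<^sup>2 + (cmod (braket a c))\<^sup>2 + (cmod (braket b c))\<^sup>2"
proof -
  have "- 3 / 2 \<le> bloch a \<bullet> bloch b + bloch a \<bullet> bloch c + bloch b \<bullet> bloch c"
    by (rule unit_vectors_inner_sum_ge) (simp_all add: bloch_self assms)
  then show ?thesis using bloch_overlap[of a b] bloch_overlap[of a c] bloch_overlap[of b c]
    by (simp add: assms)
qed

(* ket0 and trine 1, trine (-1) have Bloch vectors (0,0,1), (+-sqrt 3/2, 0, -1/2):
   three unit vectors at mutual angle 120 degrees, for which the bound is an equality. *)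
definition trine :: "real \<Rightarrow> bool \<Rightarrow> complex" where
  "trine s i = (if i then 1 / 2 else of_real (s * sqrt 3 / 2))"

definition ket0 :: "bool \<Rightarrow> complex" where
  "ket0 i = (if i then 1 else 0)"

lemma sqnorm_ket0: "sqnorm ket0 = 1"
  by (simp add: sqnorm_def ket0_def UNIV_bool)

lemma sqnorm_trine: "\<bar>s\<bar> = 1 \<Longrightarrow> sqnorm (trine s) = 1"
  by (simp add: sqnorm_def trine_def UNIV_bool power2_eq_square norm_divide norm_mult abs_mult)

lemma trine_overlap_sum:
  "(cmod (braket ket0 (trine 1)))\<^sup>2 + (cmod (braket ket0 (trine (-1))))\<^sup>2
     + (cmod (braket (trine 1) (trine (-1))))\<^sup>2 = 3 / 4"
proof -
  have "braket (trine 1) (trine (-1)) = - 1 / 2"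
    by (simp add: braket_def trine_def UNIV_bool power2_eq_square flip: of_real_mult)
  then show ?thesis by (simp add: braket_def trine_def ket0_def UNIV_bool power2_eq_square)
qed

lemma w_reductions:
  "ptrA (w \<eta>) = werner2 \<eta> \<and> ptrB (w \<eta>) = werner2 \<eta> \<and> ptrC (w \<eta>) = werner2 \<eta>"
  unfolding ptrA_def ptrB_def ptrC_def
  by (auto simp: fun_eq_iff UNIV_bool w_def werner2_def ident3_def ident2_def
        swapAB_def swapAC_def swapBC_def swap2_def split: prod.splits; simp add: field_simps)

lemma expect3_w_unit:
  assumes "unit_vec a" "unit_vec b" "unit_vec c"
  shows "0 \<le> expect3 (w \<eta>) (prod_state a b c) \<longleftrightarrow>
    0 \<le> (1 - 3 * \<eta>) / 8
         + \<eta> / 4 * ((cmod (braket a b))\<^sup>2 + (cmod (braket a c))\<^sup>2 + (cmod (braket b c))\<^sup>2)"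
  using assms by (simp add: expect3_w_product unit_vec_iff_sqnorm less_eq_complex_def algebra_simps)

lemma local_positive_w_if:
  assumes "0 \<le> \<eta>" "\<eta> \<le> 2/3"
  shows "local_positive (w \<eta>)"
  unfolding local_positive_def
proof (intro allI impI)
  fix a b c assume units: "unit_vec a" "unit_vec b" "unit_vec c"
  define S where "S = (cmod (braket a b))\<^sup>2 + (cmod (braket a c))\<^sup>2 + (cmod (braket b c))\<^sup>2"
  have "3 / 4 \<le> S"
    unfolding S_def using units by (intro overlap_sum_ge) (simp_all add: unit_vec_iff_sqnorm)
  then have "\<eta> * (3 / 4) \<le> \<eta> * S" using assms(1) by (rule mult_left_mono)
  then have "0 \<le> (1 - 3 * \<eta>) / 8 + \<eta> * S / 4" using assms(2) by (simp add: field_simps)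
  then show "0 \<le> expect3 (w \<eta>) (prod_state a b c)"
    by (simp add: expect3_w_unit[OF units] S_def)
qed

lemma le_if_local_positive_w:
  assumes "local_positive (w \<eta>)"
  shows "\<eta> \<le> 2/3"
proof -
  have units: "unit_vec ket0" "unit_vec (trine 1)" "unit_vec (trine (-1))"
    by (simp_all add: unit_vec_iff_sqnorm sqnorm_ket0 sqnorm_trine)
  with assms have "0 \<le> expect3 (w \<eta>) (prod_state ket0 (trine 1) (trine (-1)))"
    by (simp add: local_positive_def)
  then have "0 \<le> (1 - 3 * \<eta>) / 8 + \<eta> / 4 * (3 / 4)"
    by (simp add: expect3_w_unit[OF units] trine_overlap_sum)
  then show ?thesis by (simp add: field_simps)
qed

theorem mainTheorem13:
  fixes \<eta> :: real
  assumes "0 \<le> \<eta>"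
  shows "(local_positive (w \<eta>) \<longleftrightarrow> \<eta> \<le> 2/3)
     \<and> ptrA (w \<eta>) = werner2 \<eta> \<and> ptrB (w \<eta>) = werner2 \<eta> \<and> ptrC (w \<eta>) = werner2 \<eta>"
proof -
  have "local_positive (w \<eta>) \<longleftrightarrow> \<eta> \<le> 2/3"
    using le_if_local_positive_w local_positive_w_if[OF assms] by (rule iffI)
  with w_reductions show ?thesis by simp
qed

end
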